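(* Let $m\geq 0$ be an integer. Let the premiums $\{X_n, n\geq 1\}$ and the claims $\{Y_n, n\geq 1\}$ be sequences of nonnegative, identically distributed, $m$-dependent random variables with finite expectations, and let the rates of interest $\{I_n, n\geq 1\}$ be a sequence of i.i.d. nonnegative random variables with finite expectations. Suppose that the sequences $\{X_n\}$, $\{Y_n\}$, $\{I_n\}$ are mutually independent. For $u\geq 0$ define the surplus process by $U_0=u$ and $$U_n=U_{n-1}(1+I_n)+X_n-Y_n,\quad n\geq 1,$$ and the ultimate ruin probability $\Psi(u)=\mathbb{P}\big(\bigcup_{n=1}^\infty \{U_n<0\}\big)$. If there exists a positive real number $R$ satisfying $$\mathbb{E}\Big(e^{R\left(Y_1-X_1\right)}\Big)\leq 1,$$ then $$\Psi(u)\leq (m+1)e^{-R\frac{u}{m+1}}\quad\text{for all } u>\frac{(m+1)\ln(m+1)}{R}.$$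
   Context: A sequence of random variables $\{X_n, n\geq 1\}$ is called $m$-dependent (for a fixed nonnegative integer $m$) if the $\sigma$-algebras $\sigma\{X_1,\dots,X_n\}$ and $\sigma\{X_{n+k},X_{n+k+1},\dots\}$ are independent for all $k\geq m+1$ and all $n\geq 1$. In particular, $0$-dependence is independence. *)

theory Defs
  imports "HOL-Probability.Probability"
begin

definition gen_sigma :: "'a measure \<Rightarrow> (nat \<Rightarrow> 'a \<Rightarrow> real) \<Rightarrow> nat set \<Rightarrow> 'a set set" where
  "gen_sigma M X J = sigma_sets (space M) (\<Union>i\<in>J. {X i -` B \<inter> space M | B. B \<in> sets borel})"

definition (in prob_space) m_dependent :: "nat \<Rightarrow> (nat \<Rightarrow> 'a \<Rightarrow> real) \<Rightarrow> bool" where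
  "m_dependent m X \<longleftrightarrow> (\<forall>n\<ge>1. \<forall>k\<ge>m+1.
      indep_set (gen_sigma M X {1..n}) (gen_sigma M X {n+k..}))"

fun surplus :: "real \<Rightarrow> (nat \<Rightarrow> 'a \<Rightarrow> real) \<Rightarrow> (nat \<Rightarrow> 'a \<Rightarrow> real) \<Rightarrow> (nat \<Rightarrow> 'a \<Rightarrow> real)
    \<Rightarrow> nat \<Rightarrow> 'a \<Rightarrow> real" where
  "surplus u X Y I 0 \<omega> = u"
| "surplus u X Y I (Suc n) \<omega> = surplus u X Y I n \<omega> * (1 + I (Suc n) \<omega>) + X (Suc n) \<omega> - Y (Suc n) \<omega>"

definition (in prob_space) ruin_prob :: "(nat \<Rightarrow> 'a \<Rightarrow> real) \<Rightarrow> (nat \<Rightarrow> 'a \<Rightarrow> real)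
    \<Rightarrow> (nat \<Rightarrow> 'a \<Rightarrow> real) \<Rightarrow> real \<Rightarrow> real" where
  "ruin_prob X Y I u = prob (\<Union>n\<in>{1..}. {\<omega> \<in> space M. surplus u X Y I n \<omega> < 0})"

end

theory Submission
  imports Defs
begin

text \<open>
  Since the interest rates are nonnegative, a negative surplus forces some partial sum of the net
  claims \<open>Y k - X k\<close> to exceed \<open>u\<close>. Splitting the indices by their residue modulo \<open>m + 1\<close>,
  one of the \<open>m + 1\<close> subsequences then has a partial sum exceeding \<open>u / (m + 1)\<close>. Within a
  residue class consecutive indices are more than \<open>m\<close> apart, so by m-dependence of \<open>X\<close> and
  \<open>Y\<close> and their mutual independence each term is independent of its predecessors, and Lundberg's inequality (the exponential of the partial sums,
  stopped when they first exceed the level, is a supermartingale) bounds the probability of each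
  class by \<open>exp (- R u / (m + 1))\<close>. A union bound over the classes gives the factor \<open>m + 1\<close>.
\<close>

section \<open>Surplus and net claims\<close>

lemma surplus_ge_net_premiums:
  assumes "\<And>k. k \<ge> 1 \<Longrightarrow> I k \<omega> \<ge> 0"
    and "\<And>j. j \<le> n \<Longrightarrow> 0 \<le> u + (\<Sum>k=1..j. X k \<omega> - Y k \<omega>)"
  shows "u + (\<Sum>k=1..n. X k \<omega> - Y k \<omega>) \<le> surplus u X Y I n \<omega>"
  using assms(2)
proof (induction n)
  case (Suc n)
  then have IH: "u + (\<Sum>k=1..n. X k \<omega> - Y k \<omega>) \<le> surplus u X Y I n \<omega>"
    by simp
  moreover have "0 \<le> u + (\<Sum>k=1..n. X k \<omega> - Y k \<omega>)"
    using Suc.prems by simp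
  ultimately have "0 \<le> surplus u X Y I n \<omega>"
    by linarith
  with assms(1)[of "Suc n"] have "surplus u X Y I n \<omega> \<le> surplus u X Y I n \<omega> * (1 + I (Suc n) \<omega>)"
    by (simp add: algebra_simps)
  with IH show ?case
    by simp
qed simp

lemma surplus_neg_imp_net_claims_gt:
  assumes "\<And>k. k \<ge> 1 \<Longrightarrow> I k \<omega> \<ge> 0" and "surplus u X Y I n \<omega> < 0"
  shows "\<exists>j. u < (\<Sum>k=1..j. Y k \<omega> - X k \<omega>)"
proof (rule ccontr)
  assume "\<not> ?thesis"
  then have le: "(\<Sum>k=1..j. Y k \<omega> - X k \<omega>) \<le> u" for j
    using not_less by blast
  have "0 \<le> u + (\<Sum>k=1..j. X k \<omega> - Y k \<omega>)" for j
    using le[of j] by (simp add: sum_subtractf)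
  with surplus_ge_net_premiums[of I \<omega> n u X Y] assms show False
    by (meson leD order_trans)
qed

lemma sum_atLeastAtMost_residue_classes:
  fixes z :: "nat \<Rightarrow> 'b::comm_monoid_add"
  assumes "p > 0"
  shows "(\<Sum>k=1..j. z k) = (\<Sum>r<p. \<Sum>i<(j + p - Suc r) div p. z (Suc (r + i * p)))"
proof -
  have bound: "i < (j + p - Suc r) div p \<longleftrightarrow> Suc (r + i * p) \<le> j" if "r < p" for r i
  proof -
    have "i < (j + p - Suc r) div p \<longleftrightarrow> Suc i * p \<le> j + p - Suc r"
      using assms by (simp add: Suc_le_eq[symmetric] less_eq_div_iff_mult_less_eq)
    also have "\<dots> \<longleftrightarrow> Suc (r + i * p) \<le> j"
      using that by auto
    finally show ?thesis .
  qed
  have "(\<Sum>r<p. \<Sum>i<(j + p - Suc r) div p. z (Suc (r + i * p)))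
      = (\<Sum>(r, i)\<in>Sigma {..<p} (\<lambda>r. {..<(j + p - Suc r) div p}). z (Suc (r + i * p)))"
    by (rule sum.Sigma) auto
  also have "\<dots> = (\<Sum>k=1..j. z k)"
    by (rule sum.reindex_bij_witness[where i="\<lambda>k. ((k - 1) mod p, (k - 1) div p)"
        and j="\<lambda>(r, i). Suc (r + i * p)"]) (use assms in \<open>auto simp: bound\<close>)
  finally show ?thesis ..
qed

lemma exists_gt_average:
  fixes s :: "nat \<Rightarrow> real"
  assumes "p > 0" and "u < (\<Sum>r<p. s r)"
  shows "\<exists>r<p. u / p < s r"
proof (rule ccontr)
  assume "\<not> ?thesis"
  then have "(\<Sum>r<p. s r) \<le> (\<Sum>r<p. u / p)"
    by (intro sum_mono) auto
  with assms show False
    by simp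
qed

section \<open>Partial sums stopped above a level\<close>

fun stopped_sum :: "real \<Rightarrow> (nat \<Rightarrow> real) \<Rightarrow> nat \<Rightarrow> real" where
  "stopped_sum a w 0 = 0"
| "stopped_sum a w (Suc k) =
     (if a < stopped_sum a w k then stopped_sum a w k else stopped_sum a w k + w k)"

lemma stopped_sum_gt_iff: "a < stopped_sum a w k \<longleftrightarrow> (\<exists>J\<le>k. a < (\<Sum>j<J. w j))"
proof -
  have "(a < stopped_sum a w k \<longleftrightarrow> (\<exists>J\<le>k. a < (\<Sum>j<J. w j)))
      \<and> (a < stopped_sum a w k \<or> stopped_sum a w k = (\<Sum>j<k. w j))"
  proof (induction k)
    case (Suc k)
    show ?case
    proof (cases "a < stopped_sum a w k")
      case True
      then show ?thesis
        using Suc.IH le_SucI by (metis stopped_sum.simps(2))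
    next
      case False
      with Suc.IH have "stopped_sum a w (Suc k) = (\<Sum>j<Suc k. w j)"
        by simp
      moreover have "(\<exists>J\<le>Suc k. a < (\<Sum>j<J. w j)) \<longleftrightarrow> a < (\<Sum>j<Suc k. w j)"
        using False Suc.IH by (metis le_SucE order_refl)
      ultimately show ?thesis
        by (simp del: stopped_sum.simps)
    qed
  qed simp
  then show ?thesis ..
qed

lemma measurable_stopped_sum:
  assumes "\<And>j. j < k \<Longrightarrow> W j \<in> borel_measurable N"
  shows "(\<lambda>\<omega>. stopped_sum a (\<lambda>j. W j \<omega>) k) \<in> borel_measurable N"
  using assms
proof (induction k)
  case (Suc k)
  then have [measurable]: "(\<lambda>\<omega>. stopped_sum a (\<lambda>j. W j \<omega>) k) \<in> borel_measurable N"
      "W k \<in> borel_measurable N"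
    by auto
  show ?case
    by simp
qed simp

lemma borel_measurable_sigma_iff:
  assumes "G \<subseteq> Pow \<Omega>"
  shows "f \<in> borel_measurable (sigma \<Omega> G) \<longleftrightarrow> (\<forall>A\<in>sets borel. f -` A \<inter> \<Omega> \<in> sigma_sets \<Omega> G)"
  using assms by (simp add: measurable_def space_measure_of_conv sets_measure_of_conv)

lemma gen_sigma_subset_Pow: "gen_sigma M W J \<subseteq> Pow (space M)"
  unfolding gen_sigma_def by (auto dest: sigma_sets_into_sp[rotated])

lemma sigma_algebra_gen_sigma: "sigma_algebra (space M) (gen_sigma M W J)"
  unfolding gen_sigma_def by (rule sigma_algebra_sigma_sets) auto

lemma sigma_sets_gen_sigma: "sigma_sets (space M) (gen_sigma M W J) = gen_sigma M W J"
  by (rule sigma_algebra.sigma_sets_eq[OF sigma_algebra_gen_sigma])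

lemma gen_sigma_space: "space M \<in> gen_sigma M W J"
  unfolding gen_sigma_def by (rule sigma_sets_top)

lemma gen_sigma_Int:
  assumes "a \<in> gen_sigma M W J" "b \<in> gen_sigma M W J"
  shows "a \<inter> b \<in> gen_sigma M W J"
proof -
  interpret sigma_algebra "space M" "gen_sigma M W J"
    by (rule sigma_algebra_gen_sigma)
  show ?thesis
    using assms by (rule Int)
qed

lemma gen_sigma_mono: "J \<subseteq> K \<Longrightarrow> gen_sigma M W J \<subseteq> gen_sigma M W K"
  unfolding gen_sigma_def by (rule sigma_sets_subseteq) blast

lemma gen_sigma_subset_sets:
  assumes "\<And>i. i \<in> J \<Longrightarrow> W i \<in> borel_measurable M"
  shows "gen_sigma M W J \<subseteq> sets M"
  unfolding gen_sigma_def using assms by (intro sets.sigma_sets_subset) auto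

lemma vimage_in_gen_sigma: "i \<in> J \<Longrightarrow> A \<in> sets borel \<Longrightarrow> W i -` A \<inter> space M \<in> gen_sigma M W J"
  unfolding gen_sigma_def by blast

lemma measurable_gen_sigma:
  assumes "i \<in> J"
  shows "W i \<in> borel_measurable (sigma (space M) (gen_sigma M W J))"
  using assms unfolding borel_measurable_sigma_iff[OF gen_sigma_subset_Pow] sigma_sets_gen_sigma
  by (simp add: vimage_in_gen_sigma)

lemma gen_sigma_subset_sigma_sets:
  assumes "G \<subseteq> Pow (space M)" and "\<And>i. i \<in> J \<Longrightarrow> W i \<in> borel_measurable (sigma (space M) G)"
  shows "gen_sigma M W J \<subseteq> sigma_sets (space M) G"
  unfolding gen_sigma_def using assms by (intro sigma_sets_mono) (auto simp: borel_measurable_sigma_iff)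

text \<open>An \<open>\<inter>\<close>-stable generator of the \<open>\<sigma>\<close>-algebra of the pairs \<open>(X j, Y j)\<close>, \<open>j \<in> J\<close>.\<close>

definition joint_gen :: "'a measure \<Rightarrow> (nat \<Rightarrow> 'a \<Rightarrow> real) \<Rightarrow> (nat \<Rightarrow> 'a \<Rightarrow> real) \<Rightarrow> nat set \<Rightarrow> 'a set set"
  where "joint_gen M X Y J = {a \<inter> b | a b. a \<in> gen_sigma M X J \<and> b \<in> gen_sigma M Y J}"

lemma Int_in_joint_gen: "a \<in> gen_sigma M X J \<Longrightarrow> b \<in> gen_sigma M Y J \<Longrightarrow> a \<inter> b \<in> joint_gen M X Y J"
  unfolding joint_gen_def by blast

lemma joint_genE:
  assumes "c \<in> joint_gen M X Y J"
  obtains a b where "c = a \<inter> b" "a \<in> gen_sigma M X J" "b \<in> gen_sigma M Y J"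
  using assms unfolding joint_gen_def by blast

lemma joint_gen_subset_Pow: "joint_gen M X Y J \<subseteq> Pow (space M)"
  using gen_sigma_subset_Pow by (blast elim: joint_genE)

lemma Int_stable_joint_gen: "Int_stable (joint_gen M X Y J)"
proof (rule Int_stableI)
  fix c d assume "c \<in> joint_gen M X Y J" "d \<in> joint_gen M X Y J"
  then obtain a b a' b' where "c = a \<inter> b" "d = a' \<inter> b'"
    and "a \<in> gen_sigma M X J" "a' \<in> gen_sigma M X J" "b \<in> gen_sigma M Y J" "b' \<in> gen_sigma M Y J"
    by (elim joint_genE)
  then have "c \<inter> d = (a \<inter> a') \<inter> (b \<inter> b')" and "a \<inter> a' \<in> gen_sigma M X J" and "b \<inter> b' \<in> gen_sigma M Y J"
    by (auto intro: gen_sigma_Int)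
  then show "c \<inter> d \<in> joint_gen M X Y J"
    by (simp add: Int_in_joint_gen)
qed

lemma measurable_joint_gen:
  assumes "i \<in> J"
  shows "X i \<in> borel_measurable (sigma (space M) (joint_gen M X Y J))"
    and "Y i \<in> borel_measurable (sigma (space M) (joint_gen M X Y J))"
proof -
  have X_J: "a \<in> joint_gen M X Y J" if "a \<in> gen_sigma M X J" for a
  proof -
    have "a \<subseteq> space M"
      using that gen_sigma_subset_Pow by blast
    with Int_in_joint_gen[OF that gen_sigma_space, where Y=Y] show ?thesis
      by (simp add: Int_absorb2)
  qed
  have Y_J: "b \<in> joint_gen M X Y J" if "b \<in> gen_sigma M Y J" for b
  proof -
    have "b \<subseteq> space M"
      using that gen_sigma_subset_Pow by blast
    with Int_in_joint_gen[OF gen_sigma_space that, where X=X] show ?thesis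
      by (simp add: Int_absorb1)
  qed
  show "X i \<in> borel_measurable (sigma (space M) (joint_gen M X Y J))"
    "Y i \<in> borel_measurable (sigma (space M) (joint_gen M X Y J))"
    unfolding borel_measurable_sigma_iff[OF joint_gen_subset_Pow]
    by (blast intro: X_J Y_J vimage_in_gen_sigma[OF assms])+
qed

context prob_space
begin

lemma indep_set_mono: "indep_set A B \<Longrightarrow> A' \<subseteq> A \<Longrightarrow> B' \<subseteq> B \<Longrightarrow> indep_set A' B'"
  unfolding indep_set_def by (rule indep_sets_mono_sets) (auto split: bool.split)

lemma indep_set_trivial: "B \<subseteq> events \<Longrightarrow> indep_set {{}, space M} B"
  by (rule indep_setI) (auto simp: subset_eq prob_space)

lemma indep_set_if_indep_sets:
  assumes "indep_sets F I" "i \<in> I" "j \<in> I" "i \<noteq> j"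
  shows "indep_set (F i) (F j)"
proof (rule indep_setI)
  show "F i \<subseteq> events" "F j \<subseteq> events"
    using assms by (auto simp: indep_sets_def)
  fix a b assume "a \<in> F i" "b \<in> F j"
  then show "prob (a \<inter> b) = prob a * prob b"
    using indep_setsD[OF assms(1), of "{i, j}" "\<lambda>k. if k = i then a else b"] assms
    by (auto simp: Int_commute)
qed

lemma indep_var_if_indep_set:
  assumes ind: "indep_set F G" and F: "sigma_algebra (space M) F" and G: "sigma_algebra (space M) G"
    and A: "A \<in> borel_measurable (sigma (space M) F)" and B: "B \<in> borel_measurable (sigma (space M) G)"
  shows "indep_var borel A borel B"
proof -
  interpret F: sigma_algebra "space M" F by (fact F)
  interpret G: sigma_algebra "space M" G by (fact G)
  have A_F: "{A -` S \<inter> space M | S. S \<in> sets borel} \<subseteq> F"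
    using A unfolding borel_measurable_sigma_iff[OF F.space_closed] F.sigma_sets_eq by blast
  have B_G: "{B -` S \<inter> space M | S. S \<in> sets borel} \<subseteq> G"
    using B unfolding borel_measurable_sigma_iff[OF G.space_closed] G.sigma_sets_eq by blast
  show ?thesis
    unfolding indep_var_eq
  proof (intro conjI)
    show "random_variable borel A" "random_variable borel B"
      using A_F B_G indep_setD_ev1[OF ind] indep_setD_ev2[OF ind] by (auto intro!: measurableI)
    show "indep_set (sigma_sets (space M) {A -` S \<inter> space M | S. S \<in> sets borel})
        (sigma_sets (space M) {B -` S \<inter> space M | S. S \<in> sets borel})"
      using ind F.sigma_sets_subset[OF A_F] G.sigma_sets_subset[OF B_G] by (rule indep_set_mono)
  qed
qed

lemma indep_var_nn_integral:
  fixes f g :: "'c \<Rightarrow> ennreal"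
  assumes "indep_var Ma A Mb B" "f \<in> borel_measurable Ma" "g \<in> borel_measurable Mb"
  shows "(\<integral>\<^sup>+\<omega>. f (A \<omega>) * g (B \<omega>) \<partial>M) = (\<integral>\<^sup>+\<omega>. f (A \<omega>) \<partial>M) * (\<integral>\<^sup>+\<omega>. g (B \<omega>) \<partial>M)"
proof -
  have "indep_var borel (f \<circ> A) borel (g \<circ> B)"
    using assms by (rule indep_var_compose)
  moreover have "(\<lambda>_. borel) = (case_bool borel borel :: bool \<Rightarrow> ennreal measure)"
    by (rule ext) (simp split: bool.split)
  ultimately have "indep_vars (\<lambda>_. borel) (case_bool (f \<circ> A) (g \<circ> B)) UNIV"
    unfolding indep_var_def by simp
  then have "(\<integral>\<^sup>+\<omega>. (\<Prod>i\<in>UNIV. case_bool (f \<circ> A) (g \<circ> B) i \<omega>) \<partial>M)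
      = (\<Prod>i\<in>UNIV. \<integral>\<^sup>+\<omega>. case_bool (f \<circ> A) (g \<circ> B) i \<omega> \<partial>M)"
    by (intro indep_vars_nn_integral) auto
  then show ?thesis
    by (simp add: UNIV_bool mult.commute comp_def)
qed

lemma nn_integral_exp_indep_diff_eq:
  assumes "indep_var borel A borel B" "indep_var borel A' borel B'"
    and "distr M borel A = distr M borel A'" "distr M borel B = distr M borel B'"
  shows "(\<integral>\<^sup>+\<omega>. ennreal (exp (R * (B \<omega> - A \<omega>))) \<partial>M)
    = (\<integral>\<^sup>+\<omega>. ennreal (exp (R * (B' \<omega> - A' \<omega>))) \<partial>M)"
proof -
  have exp_split: "ennreal (exp (R * (y - x))) = ennreal (exp (- R * x)) * ennreal (exp (R * y))"
    for x y :: real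
    by (simp add: ennreal_mult''[symmetric] exp_add[symmetric] algebra_simps)
  have factor: "(\<integral>\<^sup>+\<omega>. ennreal (exp (R * (B \<omega> - A \<omega>))) \<partial>M)
      = (\<integral>\<^sup>+x. ennreal (exp (- R * x)) \<partial>distr M borel A) * (\<integral>\<^sup>+y. ennreal (exp (R * y)) \<partial>distr M borel B)"
    if ind: "indep_var borel A borel B" for A B
  proof -
    have [measurable]: "A \<in> borel_measurable M" "B \<in> borel_measurable M"
      using ind by (auto simp: indep_var_eq)
    have "(\<integral>\<^sup>+\<omega>. ennreal (exp (R * (B \<omega> - A \<omega>))) \<partial>M)
        = (\<integral>\<^sup>+\<omega>. ennreal (exp (- R * A \<omega>)) * ennreal (exp (R * B \<omega>)) \<partial>M)"
      unfolding exp_split ..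
    also have "\<dots> = (\<integral>\<^sup>+\<omega>. ennreal (exp (- R * A \<omega>)) \<partial>M) * (\<integral>\<^sup>+\<omega>. ennreal (exp (R * B \<omega>)) \<partial>M)"
      by (rule indep_var_nn_integral[OF ind]) measurable
    also have "\<dots> = (\<integral>\<^sup>+x. ennreal (exp (- R * x)) \<partial>distr M borel A) * (\<integral>\<^sup>+y. ennreal (exp (R * y)) \<partial>distr M borel B)"
      by (simp add: nn_integral_distr)
    finally show ?thesis .
  qed
  show ?thesis
    by (simp only: factor[OF assms(1)] factor[OF assms(2)] assms(3,4))
qed

lemma nn_integral_exp_net_claims_eq:
  assumes XY: "indep_set (gen_sigma M X {1..}) (gen_sigma M Y {1..})"
    and "distr M borel (X k) = distr M borel (X 1)" "distr M borel (Y k) = distr M borel (Y 1)"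
    and "k \<ge> 1"
  shows "(\<integral>\<^sup>+\<omega>. ennreal (exp (R * (Y k \<omega> - X k \<omega>))) \<partial>M)
    = (\<integral>\<^sup>+\<omega>. ennreal (exp (R * (Y 1 \<omega> - X 1 \<omega>))) \<partial>M)"
proof -
  have indep: "indep_var borel (X j) borel (Y j)" if "j \<ge> 1" for j
    using that by (intro indep_var_if_indep_set[OF XY] sigma_algebra_gen_sigma measurable_gen_sigma) auto
  show ?thesis
    using assms by (intro nn_integral_exp_indep_diff_eq indep) simp_all
qed

lemma indep_set_joint_gen:
  assumes XY: "indep_set (gen_sigma M X K) (gen_sigma M Y K)" and "J1 \<subseteq> K" "J2 \<subseteq> K"
    and X: "indep_set (gen_sigma M X J1) (gen_sigma M X J2)"
    and Y: "indep_set (gen_sigma M Y J1) (gen_sigma M Y J2)"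
  shows "indep_set (sigma_sets (space M) (joint_gen M X Y J1)) (sigma_sets (space M) (joint_gen M X Y J2))"
proof (rule indep_set_sigma_sets[OF _ Int_stable_joint_gen Int_stable_joint_gen])
  have X_K: "gen_sigma M X J \<subseteq> gen_sigma M X K" and Y_K: "gen_sigma M Y J \<subseteq> gen_sigma M Y K"
    if "J \<in> {J1, J2}" for J
    using that \<open>J1 \<subseteq> K\<close> \<open>J2 \<subseteq> K\<close> gen_sigma_mono by blast+
  show "indep_set (joint_gen M X Y J1) (joint_gen M X Y J2)"
  proof (rule indep_setI)
    have "joint_gen M X Y J \<subseteq> events" if "J \<in> {J1, J2}" for J
    proof
      fix c assume "c \<in> joint_gen M X Y J"
      then obtain a b where "c = a \<inter> b" "a \<in> gen_sigma M X J" "b \<in> gen_sigma M Y J"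
        by (rule joint_genE)
      moreover from this have "a \<in> events" "b \<in> events"
        using X_K[OF that] Y_K[OF that] indep_setD_ev1[OF XY] indep_setD_ev2[OF XY] by blast+
      ultimately show "c \<in> events"
        by simp
    qed
    then show "joint_gen M X Y J1 \<subseteq> events" "joint_gen M X Y J2 \<subseteq> events"
      by auto
  next
    fix c d assume "c \<in> joint_gen M X Y J1" "d \<in> joint_gen M X Y J2"
    then obtain a1 b1 a2 b2 where c: "c = a1 \<inter> b1" and d: "d = a2 \<inter> b2"
      and a1: "a1 \<in> gen_sigma M X J1" and b1: "b1 \<in> gen_sigma M Y J1"
      and a2: "a2 \<in> gen_sigma M X J2" and b2: "b2 \<in> gen_sigma M Y J2"
      by (elim joint_genE)
    have K: "a1 \<in> gen_sigma M X K" "a2 \<in> gen_sigma M X K" "b1 \<in> gen_sigma M Y K" "b2 \<in> gen_sigma M Y K"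
      using a1 a2 b1 b2 X_K Y_K by blast+
    then have a12: "a1 \<inter> a2 \<in> gen_sigma M X K" and b12: "b1 \<inter> b2 \<in> gen_sigma M Y K"
      using gen_sigma_Int by blast+
    have "prob (c \<inter> d) = prob ((a1 \<inter> a2) \<inter> (b1 \<inter> b2))"
      unfolding c d by (simp add: Int_ac)
    also have "\<dots> = prob (a1 \<inter> a2) * prob (b1 \<inter> b2)"
      using indep_setD[OF XY a12 b12] .
    also have "\<dots> = (prob a1 * prob b1) * (prob a2 * prob b2)"
      using indep_setD[OF X a1 a2] indep_setD[OF Y b1 b2] by simp
    also have "\<dots> = prob c * prob d"
      using K by (simp add: c d indep_setD[OF XY])
    finally show "prob (c \<inter> d) = prob c * prob d" .
  qed
qed

section \<open>Lundberg's inequality\<close>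

lemma nn_integral_exp_stopped_sum_le_1:
  assumes W [measurable]: "\<And>k. W k \<in> borel_measurable M"
    and indep: "\<And>k. indep_set (gen_sigma M W {..<k}) (gen_sigma M W {k})"
    and lund: "\<And>k. (\<integral>\<^sup>+\<omega>. ennreal (exp (R * W k \<omega>)) \<partial>M) \<le> 1"
  shows "(\<integral>\<^sup>+\<omega>. ennreal (exp (R * stopped_sum a (\<lambda>j. W j \<omega>) k)) \<partial>M) \<le> 1"
proof (induction k)
  case 0
  then show ?case
    by (simp add: emeasure_space_1)
next
  case (Suc k)
  define T where "T = (\<lambda>\<omega>. stopped_sum a (\<lambda>j. W j \<omega>) k)"
  have [measurable]: "T \<in> borel_measurable M"
    unfolding T_def by (rule measurable_stopped_sum) simp
  have indep_T: "indep_var borel T borel (W k)"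
    unfolding T_def
    by (intro indep_var_if_indep_set[OF indep sigma_algebra_gen_sigma sigma_algebra_gen_sigma]
        measurable_stopped_sum measurable_gen_sigma) auto
  define stop where "stop t = ennreal (if a < t then exp (R * t) else 0)" for t
  define go where "go t = ennreal (if a < t then 0 else exp (R * t))" for t
  define g where "g t = ennreal (exp (R * t))" for t
  have [measurable]: "stop \<in> borel_measurable borel" "go \<in> borel_measurable borel"
      "g \<in> borel_measurable borel"
    unfolding stop_def go_def g_def by measurable
  \<comment> \<open>Before stopping, the next step multiplies by exp (R W k), which is independent
    of the past and has mean at most 1.\<close>
  have step: "ennreal (exp (R * stopped_sum a (\<lambda>j. W j \<omega>) (Suc k))) = stop (T \<omega>) + go (T \<omega>) * g (W k \<omega>)"
    for \<omega>
    by (simp add: T_def stop_def go_def g_def distrib_left exp_add ennreal_mult'')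
  have "(\<integral>\<^sup>+\<omega>. ennreal (exp (R * stopped_sum a (\<lambda>j. W j \<omega>) (Suc k))) \<partial>M)
      = (\<integral>\<^sup>+\<omega>. stop (T \<omega>) \<partial>M) + (\<integral>\<^sup>+\<omega>. go (T \<omega>) * g (W k \<omega>) \<partial>M)"
    unfolding step by (rule nn_integral_add) auto
  also have "(\<integral>\<^sup>+\<omega>. go (T \<omega>) * g (W k \<omega>) \<partial>M) = (\<integral>\<^sup>+\<omega>. go (T \<omega>) \<partial>M) * (\<integral>\<^sup>+\<omega>. g (W k \<omega>) \<partial>M)"
    by (rule indep_var_nn_integral[OF indep_T]) auto
  also have "\<dots> \<le> (\<integral>\<^sup>+\<omega>. go (T \<omega>) \<partial>M) * 1"
    by (rule mult_left_mono) (use lund[of k] in \<open>auto simp: g_def\<close>)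
  also have "(\<integral>\<^sup>+\<omega>. stop (T \<omega>) \<partial>M) + (\<integral>\<^sup>+\<omega>. go (T \<omega>) \<partial>M) * 1
      = (\<integral>\<^sup>+\<omega>. stop (T \<omega>) + go (T \<omega>) \<partial>M)"
    by (simp add: nn_integral_add)
  also have "\<dots> = (\<integral>\<^sup>+\<omega>. ennreal (exp (R * T \<omega>)) \<partial>M)"
    by (rule nn_integral_cong) (simp add: stop_def go_def)
  finally show ?case
    using Suc.IH by (simp add: T_def add_left_mono order_trans)
qed

theorem lundberg_inequality:
  assumes W [measurable]: "\<And>k. W k \<in> borel_measurable M"
    and indep: "\<And>k. indep_set (gen_sigma M W {..<k}) (gen_sigma M W {k})"
    and lund: "\<And>k. (\<integral>\<^sup>+\<omega>. ennreal (exp (R * W k \<omega>)) \<partial>M) \<le> 1"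
    and "R > 0"
  shows "prob {\<omega>\<in>space M. \<exists>J. a < (\<Sum>j<J. W j \<omega>)} \<le> exp (- R * a)"
proof -
  define B where "B k = {\<omega>\<in>space M. a < stopped_sum a (\<lambda>j. W j \<omega>) k}" for k
  have [measurable]: "(\<lambda>\<omega>. stopped_sum a (\<lambda>j. W j \<omega>) k) \<in> borel_measurable M" for k
    by (rule measurable_stopped_sum) simp
  then have B_events: "range B \<subseteq> events"
    unfolding B_def by auto
  have "emeasure M (B k) \<le> exp (- R * a)" for k
  proof -
    have "emeasure M (B k) \<le> emeasure M {\<omega>\<in>space M. stopped_sum a (\<lambda>j. W j \<omega>) k \<ge> a}"
      unfolding B_def by (rule emeasure_mono) auto
    also have "\<dots> \<le> ennreal (exp (- R * a))
        * (\<integral>\<^sup>+\<omega>. ennreal (exp (R * stopped_sum a (\<lambda>j. W j \<omega>) k)) * indicator (space M) \<omega> \<partial>M)"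
      using \<open>R > 0\<close> by (intro Chernoff_ineq_nn_integral_ge) auto
    also have "\<dots> = ennreal (exp (- R * a)) * (\<integral>\<^sup>+\<omega>. ennreal (exp (R * stopped_sum a (\<lambda>j. W j \<omega>) k)) \<partial>M)"
      by (intro arg_cong[where f="(*) _"] nn_integral_cong) simp
    also have "\<dots> \<le> ennreal (exp (- R * a)) * 1"
      using nn_integral_exp_stopped_sum_le_1[OF W indep lund] by (rule mult_left_mono) simp
    finally show ?thesis
      by simp
  qed
  moreover have "incseq B"
    unfolding B_def stopped_sum_gt_iff by (intro incseq_SucI) (auto intro: le_SucI)
  moreover have "{\<omega>\<in>space M. \<exists>J. a < (\<Sum>j<J. W j \<omega>)} = (\<Union>k. B k)"
    unfolding B_def stopped_sum_gt_iff by blast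
  ultimately have "emeasure M {\<omega>\<in>space M. \<exists>J. a < (\<Sum>j<J. W j \<omega>)} \<le> exp (- R * a)"
    using B_events by (simp add: SUP_emeasure_incseq[symmetric] SUP_least)
  then show ?thesis
    by (simp add: emeasure_eq_measure)
qed

section \<open>The m-dependent risk model\<close>

lemma indep_set_m_dependent_pair:
  assumes "m_dependent m X" "m_dependent m Y"
    and XY: "indep_set (gen_sigma M X {1..}) (gen_sigma M Y {1..})" and "n \<ge> 1"
  shows "indep_set (sigma_sets (space M) (joint_gen M X Y {1..n}))
      (sigma_sets (space M) (joint_gen M X Y {n + (m + 1)..}))"
proof -
  have "indep_set (gen_sigma M Z {1..n}) (gen_sigma M Z {n + (m + 1)..})" if "m_dependent m Z" for Z
  proof -
    from that \<open>n \<ge> 1\<close> have all: "\<forall>k\<ge>m + 1. indep_set (gen_sigma M Z {1..n}) (gen_sigma M Z {n + k..})"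
      unfolding m_dependent_def by blast
    show ?thesis
      using spec[OF all, of "m + 1"] by simp
  qed
  with assms show ?thesis
    by (intro indep_set_joint_gen[OF XY]) auto
qed

lemma indep_set_spaced_net_claims:
  assumes meas: "\<And>n. n \<ge> 1 \<Longrightarrow> X n \<in> borel_measurable M \<and> Y n \<in> borel_measurable M"
    and mdep: "m_dependent m X" "m_dependent m Y"
    and XY: "indep_set (gen_sigma M X {1..}) (gen_sigma M Y {1..})"
    and s: "s 0 \<ge> 1" "\<And>i. s i + m < s (Suc i)"
  shows "indep_set (gen_sigma M (\<lambda>i \<omega>. Y (s i) \<omega> - X (s i) \<omega>) {..<k})
      (gen_sigma M (\<lambda>i \<omega>. Y (s i) \<omega> - X (s i) \<omega>) {k})"
    (is "indep_set (gen_sigma M ?V _) (gen_sigma M ?V _)")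
proof -
  have s_mono: "s i \<le> s j" if "i \<le> j" for i j
    by (intro lift_Suc_mono_le[OF _ that] less_imp_le add_lessD1[OF s(2)])
  have s_pos: "s i \<ge> 1" for i
    using s(1) s_mono[of 0 i] by simp
  have V_meas: "?V i \<in> borel_measurable (sigma (space M) (joint_gen M X Y J))" if "s i \<in> J" for i J
  proof -
    note [measurable] = measurable_joint_gen[OF that]
    show ?thesis
      by measurable
  qed
  show ?thesis
  proof (cases k)
    case 0
    have "gen_sigma M ?V {..<k} = {{}, space M}"
      using 0 by (simp add: gen_sigma_def sigma_sets_empty_eq)
    moreover have "gen_sigma M ?V {k} \<subseteq> events"
      using meas s_pos by (intro gen_sigma_subset_sets borel_measurable_diff) auto
    ultimately show ?thesis
      by (simp add: indep_set_trivial)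
  next
    case (Suc k')
    show ?thesis
    proof (rule indep_set_mono[OF indep_set_m_dependent_pair[OF mdep XY s_pos[of k']]])
      have past: "s i \<in> {1..s k'}" if "i \<in> {..<k}" for i
        using that Suc s_pos s_mono[of i k'] by simp
      show "gen_sigma M ?V {..<k} \<subseteq> sigma_sets (space M) (joint_gen M X Y {1..s k'})"
        by (intro gen_sigma_subset_sigma_sets joint_gen_subset_Pow V_meas past)
      have future: "s k \<in> {s k' + (m + 1)..}"
        using Suc s(2)[of k'] by simp
      show "gen_sigma M ?V {k} \<subseteq> sigma_sets (space M) (joint_gen M X Y {s k' + (m + 1)..})"
        using future by (intro gen_sigma_subset_sigma_sets joint_gen_subset_Pow V_meas) simp
    qed
  qed
qed

lemma ruin_prob_le_residue_classes:
  assumes meas: "\<And>n. n \<ge> 1 \<Longrightarrow> X n \<in> borel_measurable M \<and> Y n \<in> borel_measurable M"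
    and I_nonneg: "\<And>n \<omega>. n \<ge> 1 \<Longrightarrow> \<omega> \<in> space M \<Longrightarrow> I n \<omega> \<ge> 0" and "p > 0"
  shows "ruin_prob X Y I u \<le> (\<Sum>r<p. prob {\<omega>\<in>space M.
      \<exists>J. u / p < (\<Sum>i<J. Y (Suc (r + i * p)) \<omega> - X (Suc (r + i * p)) \<omega>)})"
    (is "_ \<le> (\<Sum>r<p. prob (?E r))")
proof -
  have [measurable]: "X (Suc n) \<in> borel_measurable M" "Y (Suc n) \<in> borel_measurable M" for n
    using meas by auto
  have "(\<Union>n\<in>{1..}. {\<omega> \<in> space M. surplus u X Y I n \<omega> < 0}) \<subseteq> (\<Union>r<p. ?E r)"
  proof safe
    fix n \<omega> assume \<omega>: "\<omega> \<in> space M" and ruin: "surplus u X Y I n \<omega> < 0"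
    have "\<exists>j. u < (\<Sum>k=1..j. Y k \<omega> - X k \<omega>)"
      by (rule surplus_neg_imp_net_claims_gt[OF _ ruin]) (use I_nonneg \<omega> in auto)
    then obtain j where "u < (\<Sum>k=1..j. Y k \<omega> - X k \<omega>)"
      by blast
    then have "u < (\<Sum>r<p. \<Sum>i<(j + p - Suc r) div p. Y (Suc (r + i * p)) \<omega> - X (Suc (r + i * p)) \<omega>)"
      by (simp only: sum_atLeastAtMost_residue_classes[OF \<open>p > 0\<close>])
    from exists_gt_average[OF \<open>p > 0\<close> this] obtain r where "r < p"
      and "u / p < (\<Sum>i<(j + p - Suc r) div p. Y (Suc (r + i * p)) \<omega> - X (Suc (r + i * p)) \<omega>)"
      by blast
    with \<omega> show "\<omega> \<in> (\<Union>r<p. ?E r)"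
      by blast
  qed
  then have "ruin_prob X Y I u \<le> prob (\<Union>r<p. ?E r)"
    unfolding ruin_prob_def by (intro finite_measure_mono) measurable
  also have "\<dots> \<le> (\<Sum>r<p. prob (?E r))"
    by (intro measure_UNION_le) auto
  finally show ?thesis .
qed

end

theorem theorem3p4:
  fixes M :: "'a measure" and m :: nat and X Y I :: "nat \<Rightarrow> 'a \<Rightarrow> real" and R :: real
  assumes "prob_space M"
    and meas: "\<And>n. n \<ge> 1 \<Longrightarrow> X n \<in> borel_measurable M \<and> Y n \<in> borel_measurable M \<and> I n \<in> borel_measurable M"
    and nonneg: "\<And>n \<omega>. n \<ge> 1 \<Longrightarrow> \<omega> \<in> space M \<Longrightarrow> X n \<omega> \<ge> 0 \<and> Y n \<omega> \<ge> 0 \<and> I n \<omega> \<ge> 0"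
    and integ: "\<And>n. n \<ge> 1 \<Longrightarrow> integrable M (X n) \<and> integrable M (Y n) \<and> integrable M (I n)"
    and idX: "\<And>n. n \<ge> 1 \<Longrightarrow> distr M borel (X n) = distr M borel (X 1)"
    and idY: "\<And>n. n \<ge> 1 \<Longrightarrow> distr M borel (Y n) = distr M borel (Y 1)"
    and idI: "\<And>n. n \<ge> 1 \<Longrightarrow> distr M borel (I n) = distr M borel (I 1)"
    and mdepX: "prob_space.m_dependent M m X"
    and mdepY: "prob_space.m_dependent M m Y"
    and indI: "prob_space.indep_vars M (\<lambda>_. borel) I {1..}"
    and mutual: "prob_space.indep_sets M
       (\<lambda>j::nat. if j = 0 then gen_sigma M X {1..} else if j = 1 then gen_sigma M Y {1..} else gen_sigma M I {1..})
       {0, 1, 2}"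
    and R_pos: "R > 0"
    and lund: "(\<integral>\<^sup>+ \<omega>. ennreal (exp (R * (Y 1 \<omega> - X 1 \<omega>))) \<partial>M) \<le> 1"
  shows "\<forall>u::real. u > real (m + 1) * ln (real (m + 1)) / R \<longrightarrow>
           prob_space.ruin_prob M X Y I u \<le> real (m + 1) * exp (- R * u / real (m + 1))"
proof -
  interpret prob_space M by fact
  define p where "p = m + 1"
  have XY: "indep_set (gen_sigma M X {1..}) (gen_sigma M Y {1..})"
    using indep_set_if_indep_sets[OF mutual, of 0 1] by simp
  have lund_k: "(\<integral>\<^sup>+\<omega>. ennreal (exp (R * (Y k \<omega> - X k \<omega>))) \<partial>M) \<le> 1" if "k \<ge> 1" for k
    using lund nn_integral_exp_net_claims_eq[OF XY idX[OF that] idY[OF that] that] by simp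
  have class_bound: "prob {\<omega>\<in>space M. \<exists>J. a < (\<Sum>i<J. Y (Suc (r + i * p)) \<omega> - X (Suc (r + i * p)) \<omega>)}
      \<le> exp (- R * a)" for r a
    using meas lund_k R_pos
    by (intro lundberg_inequality indep_set_spaced_net_claims[OF _ mdepX mdepY XY]
        borel_measurable_diff) (auto simp: p_def)
  \<comment> \<open>The bound holds for every \<open>u\<close>; the lower bound on \<open>u\<close> only makes it smaller than 1.\<close>
  show ?thesis
  proof (intro allI impI)
    fix u :: real
    have "ruin_prob X Y I u \<le> (\<Sum>r<p. prob {\<omega>\<in>space M.
        \<exists>J. u / p < (\<Sum>i<J. Y (Suc (r + i * p)) \<omega> - X (Suc (r + i * p)) \<omega>)})"
      using meas nonneg by (intro ruin_prob_le_residue_classes) (auto simp: p_def)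
    also have "\<dots> \<le> (\<Sum>r<p. exp (- R * (u / p)))"
      by (intro sum_mono class_bound)
    also have "\<dots> = real (m + 1) * exp (- R * u / real (m + 1))"
      by (simp add: p_def)
    finally show "ruin_prob X Y I u \<le> real (m + 1) * exp (- R * u / real (m + 1))" .
  qed
qed

end
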